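(* Break the segment $[0,1]$ at three independent uniformly random points into four pieces. Conditioned on the event that the four pieces can form a quadrilateral, the expected value of the maximum area of a quadrilateral having these four side lengths is $\frac{17\pi}{525}-\frac{\pi^2}{160}$.
   Context: Four lengths summing to $1$ can form a quadrilateral iff each is less than $1/2$. The maximum is taken over all quadrilaterals with the given four side lengths (it is attained by the cyclic quadrilateral). *)

theory Defs
  imports "HOL-Analysis.Analysis"
begin

text \<open>Signed area (shoelace formula) of the closed polygon z1 z2 z3 z4, vertices in the plane
  (complex numbers).\<close>
definition quad_area :: "complex \<Rightarrow> complex \<Rightarrow> complex \<Rightarrow> complex \<Rightarrow> real" where
  "quad_area z1 z2 z3 z4 =
     \<bar>Im (cnj z1 * z2 + cnj z2 * z3 + cnj z3 * z4 + cnj z4 * z1)\<bar> / 2"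

definition is_quadrilateral ::
  "complex \<Rightarrow> complex \<Rightarrow> complex \<Rightarrow> complex \<Rightarrow> real \<Rightarrow> real \<Rightarrow> real \<Rightarrow> real \<Rightarrow> bool" where
  "is_quadrilateral z1 z2 z3 z4 a b c d \<longleftrightarrow>
     cmod (z2 - z1) = a \<and> cmod (z3 - z2) = b \<and> cmod (z4 - z3) = c \<and> cmod (z1 - z4) = d \<and>
     closed_segment z1 z2 \<inter> closed_segment z3 z4 = {} \<and>
     closed_segment z2 z3 \<inter> closed_segment z4 z1 = {}"

definition max_quad_area :: "real \<Rightarrow> real \<Rightarrow> real \<Rightarrow> real \<Rightarrow> real" where
  "max_quad_area a b c d =
     Sup {quad_area z1 z2 z3 z4 | z1 z2 z3 z4. is_quadrilateral z1 z2 z3 z4 a b c d}"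

definition pieces :: "real \<times> real \<times> real \<Rightarrow> real list" where
  "pieces p = (case p of (x, y, z) \<Rightarrow>
     let u = min x (min y z); w = max x (max y z); v = x + y + z - u - w
     in [u, v - u, w - v, 1 - w])"

definition max_area_of_pieces :: "real \<times> real \<times> real \<Rightarrow> real" where
  "max_area_of_pieces p = (case pieces p of [a, b, c, d] \<Rightarrow> max_quad_area a b c d | _ \<Rightarrow> 0)"

definition quad_event :: "(real \<times> real \<times> real) set" where
  "quad_event = {p. \<forall>l \<in> set (pieces p). l < 1/2}"

definition three_unif :: "(real \<times> real \<times> real) measure" where
  "three_unif = uniform_measure lborel ({0..1} \<times> {0..1} \<times> {0..1})"

end

(*
  By Brahmagupta's formula, the largest area of a quadrilateral with sides a, b, c, d of perimeter 1
  is sqrt ((1/2 - a) (1/2 - b) (1/2 - c) (1/2 - d)): Ptolemy's inequality bounds the area of every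
  quadrilateral with these sides, and the cyclic one attains the bound.

  Put u_i = 1/2 - (i-th piece). The pieces sum to 1 iff u_1 + u_2 + u_3 + u_4 = 1, they form a
  quadrilateral iff all u_i lie in (0, 1/2), and the area is sqrt (u_1 u_2) * sqrt (u_3 u_4). Hence
  the integral of the area over the cube is 6 times the value at 1 of the self-convolution of
  K(s) = integral of sqrt (u (s - u)) over 0 < u, s - u < 1/2, the area under an arc of a
  semicircle: K(s) = pi s^2 / 8 for s <= 1/2, and an arcsine expression for s > 1/2. The same
  computation with the weight 1 instead of the area shows that the event has probability 1/2.
*)
theory Submission
  imports Defs
begin

section \<open>Brahmagupta's formula\<close>

definition brahmagupta_area :: "real \<Rightarrow> real \<Rightarrow> real \<Rightarrow> real \<Rightarrow> real" where
  "brahmagupta_area a b c d =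
     sqrt (((b+c+d-a)/2) * ((a+c+d-b)/2) * ((a+b+d-c)/2) * ((a+b+c-d)/2))"

definition quadrilateral_sides :: "real \<Rightarrow> real \<Rightarrow> real \<Rightarrow> real \<Rightarrow> bool" where
  "quadrilateral_sides a b c d \<longleftrightarrow>
     0 < a \<and> 0 < b \<and> 0 < c \<and> 0 < d \<and>
     a < b + c + d \<and> b < a + c + d \<and> c < a + b + d \<and> d < a + b + c"

lemma brahmagupta_product_eq:
  "((b+c+d-a)/2) * ((a+c+d-b)/2) * ((a+b+d-c)/2) * ((a+b+c-d)/2) =
     ((a*b + c*d)^2 - ((a^2 + b^2 - c^2 - d^2) / 2)^2) / 4"
  for a b c d :: real
  by (simp add: field_simps power2_eq_square)

lemma quad_area_diagonals:
  "quad_area z1 z2 z3 z4 = \<bar>Im (cnj (z3 - z1) * (z4 - z2))\<bar> / 2"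
  unfolding quad_area_def by (simp add: algebra_simps)

lemma Re_diagonals:
  "2 * Re (cnj (z3 - z1) * (z4 - z2)) =
     cmod (z3 - z2)^2 + cmod (z1 - z4)^2 - cmod (z2 - z1)^2 - cmod (z4 - z3)^2"
  unfolding cmod_power2 by (simp add: algebra_simps power2_eq_square)

lemma ptolemy_inequality:
  "cmod (z3 - z1) * cmod (z4 - z2) \<le>
     cmod (z2 - z1) * cmod (z4 - z3) + cmod (z1 - z4) * cmod (z3 - z2)"
proof -
  have "(z3 - z1) * (z4 - z2) = (z2 - z1) * (z4 - z3) + (z1 - z4) * (z2 - z3)"
    by (simp add: algebra_simps)
  then have "cmod ((z3 - z1) * (z4 - z2)) \<le>
      cmod ((z2 - z1) * (z4 - z3)) + cmod ((z1 - z4) * (z2 - z3))"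
    by (metis norm_triangle_ineq)
  then show ?thesis
    by (simp add: norm_mult norm_minus_commute)
qed

text \<open>Twice the area is \<open>\<bar>Im\<bar>\<close> of the product of the diagonals, whose modulus is bounded by
  Ptolemy's inequality and whose real part is fixed by the sides.\<close>
lemma quad_area_le_brahmagupta:
  assumes "cmod (z2 - z1) = a" "cmod (z3 - z2) = b" "cmod (z4 - z3) = c" "cmod (z1 - z4) = d"
  shows "quad_area z1 z2 z3 z4 \<le> brahmagupta_area a b c d"
proof -
  define w where "w = cnj (z3 - z1) * (z4 - z2)"
  have "cmod w = cmod (z3 - z1) * cmod (z4 - z2)"
    unfolding w_def norm_mult complex_mod_cnj ..
  then have "cmod w \<le> a * c + d * b"
    using ptolemy_inequality[of z3 z1 z4 z2] assms by simp
  then have "(Re w)^2 + (Im w)^2 \<le> (a * c + d * b)^2"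
    by (metis cmod_power2 norm_ge_zero power_mono)
  moreover have "Re w = (b^2 + d^2 - a^2 - c^2) / 2"
    using Re_diagonals[of z3 z1 z4 z2] assms by (simp add: w_def)
  ultimately have "(\<bar>Im w\<bar> / 2)^2 \<le> ((a * c + d * b)^2 - ((b^2 + d^2 - a^2 - c^2) / 2)^2) / 4"
    by (simp add: power_divide)
  also have "\<dots> = ((b+c+d-a)/2) * ((a+c+d-b)/2) * ((a+b+d-c)/2) * ((a+b+c-d)/2)"
    by (simp add: field_simps power2_eq_square)
  finally show ?thesis
    unfolding quad_area_diagonals brahmagupta_area_def w_def[symmetric] by (rule real_le_rsqrt)
qed

lemma is_quadrilateral_rotate:
  "is_quadrilateral z1 z2 z3 z4 a b c d \<Longrightarrow> is_quadrilateral z2 z3 z4 z1 b c d a"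
  unfolding is_quadrilateral_def by blast

lemma is_quadrilateral_side_bounds:
  assumes "is_quadrilateral z1 z2 z3 z4 a b c d"
  shows "0 < a \<and> a < b + c + d"
proof -
  note q = assms[unfolded is_quadrilateral_def]
  have "z1 \<noteq> z2"
    using q by auto
  then have "0 < a"
    using q by auto
  moreover have "a < b + c + d"
  proof (rule ccontr)
    assume "\<not> a < b + c + d"
    moreover have "dist z1 z3 \<le> dist z1 z4 + dist z4 z3"
      by (rule dist_triangle)
    ultimately have "dist z1 z3 + dist z3 z2 \<le> dist z1 z2"
      using q by (simp add: dist_norm norm_minus_commute)
    then have "z3 \<in> closed_segment z1 z2"
      by (metis antisym dist_triangle between between_mem_segment)
    then show False
      using q by auto
  qed
  ultimately show ?thesis ..
qed

lemma is_quadrilateral_imp_quadrilateral_sides: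
  assumes "is_quadrilateral z1 z2 z3 z4 a b c d"
  shows "quadrilateral_sides a b c d"
proof -
  have "0 < a \<and> a < b + c + d" "0 < b \<and> b < c + d + a" "0 < c \<and> c < d + a + b"
    "0 < d \<and> d < a + b + c"
    using assms by (meson is_quadrilateral_rotate is_quadrilateral_side_bounds)+
  then show ?thesis
    unfolding quadrilateral_sides_def by linarith
qed

lemma closed_segment_Im_sign:
  assumes "Im u = 0" "w \<in> closed_segment u v"
  shows "0 \<le> Im w * Im v" and "Im w = 0 \<Longrightarrow> Im v \<noteq> 0 \<Longrightarrow> w = u"
proof -
  obtain t where t: "0 \<le> t" "w = (1 - t) *\<^sub>R u + t *\<^sub>R v"
    using assms(2) unfolding in_segment by blast
  then have Im_w: "Im w = t * Im v"
    using assms(1) by simp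
  then show "0 \<le> Im w * Im v"
    using t(1) by (simp add: mult.assoc)
  show "w = u" if "Im w = 0" "Im v \<noteq> 0"
    using that t Im_w by simp
qed

lemma quadrilateral_across_diagonal:
  assumes "0 < p" "Im z2 < 0" "0 < Im z4"
  shows "closed_segment 0 z2 \<inter> closed_segment (of_real p) z4 = {}"
    and "closed_segment z2 (of_real p) \<inter> closed_segment z4 0 = {}"
    and "quad_area 0 z2 (of_real p) z4 = p * (Im z4 - Im z2) / 2"
proof -
  have no_common_point: "closed_segment (of_real u) z2 \<inter> closed_segment (of_real v) z4 = {}"
    if "u \<noteq> v" for u v :: real
  proof (intro equals0I)
    fix w
    assume w: "w \<in> closed_segment (of_real u) z2 \<inter> closed_segment (of_real v) z4"
    then have "0 \<le> Im w * Im z2" "0 \<le> Im w * Im z4"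
      using closed_segment_Im_sign(1)[of "of_real u" w z2]
        closed_segment_Im_sign(1)[of "of_real v" w z4]
      by simp_all
    then have "Im w = 0"
      using assms(2,3) by (simp add: zero_le_mult_iff)
    then have "w = of_real u" "w = of_real v"
      using w assms(2,3) closed_segment_Im_sign(2)[of "of_real u" w z2]
        closed_segment_Im_sign(2)[of "of_real v" w z4]
      by simp_all
    then show False
      using that by simp
  qed
  show "closed_segment 0 z2 \<inter> closed_segment (of_real p) z4 = {}"
    using no_common_point[of 0 p] assms(1) by simp
  show "closed_segment z2 (of_real p) \<inter> closed_segment z4 0 = {}"
    using no_common_point[of p 0] assms(1) by (simp add: closed_segment_commute)
  show "quad_area 0 z2 (of_real p) z4 = p * (Im z4 - Im z2) / 2"
    using assms by (simp add: quad_area_diagonals)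
qed

lemma triangle_law_of_cosines:
  fixes a b C :: real
  assumes "0 < a" "0 < b" "C^2 < 1"
  defines "p \<equiv> sqrt (a^2 + b^2 - 2*a*b*C)"
  shows "0 < p" and "\<exists>z. cmod z = a \<and> cmod (of_real p - z) = b \<and> Im z = a * b * sqrt (1 - C^2) / p"
proof -
  define S where "S = sqrt (1 - C^2)"
  have S: "S^2 = 1 - C^2"
    using assms(3) by (simp add: S_def)
  have "C < 1"
    using assms(3) by (simp add: abs_less_iff power2_less_1_iff)
  then have "a * b * C < a * b"
    using assms by simp
  moreover have "0 \<le> (a - b)^2"
    by simp
  ultimately have P: "0 < a^2 + b^2 - 2*a*b*C"
    by (simp add: power2_eq_square algebra_simps)
  then show p: "0 < p"
    by (simp add: p_def)
  have p2: "p^2 = a^2 + b^2 - 2*a*b*C"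
    using P by (simp add: p_def)
  define x where "x = (a^2 + p^2 - b^2) / (2*p)"
  define y where "y = a * b * S / p"
  have "x^2 + y^2 = ((a^2 + p^2 - b^2)^2 + 4*a^2*b^2*S^2) / (4*p^2)"
    using p by (simp add: x_def y_def field_simps power2_eq_square)
  also have "(a^2 + p^2 - b^2)^2 + 4*a^2*b^2*S^2 = 4*a^2*p^2"
    unfolding S p2 by (simp add: power2_eq_square algebra_simps)
  finally have a: "x^2 + y^2 = a^2"
    using p by simp
  have "(p - x)^2 + y^2 = p^2 - 2*p*x + (x^2 + y^2)"
    by (simp add: power2_eq_square algebra_simps)
  also have "\<dots> = b^2"
    using a p by (simp add: x_def)
  finally have b: "(p - x)^2 + y^2 = b^2" .
  have "cmod (Complex x y) = a" "cmod (of_real p - Complex x y) = b"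
    using a b assms(1,2) by (simp_all add: cmod_def complex_of_real_def)
  then show "\<exists>z. cmod z = a \<and> cmod (of_real p - z) = b \<and> Im z = a * b * sqrt (1 - C^2) / p"
    by (intro exI[of _ "Complex x y"]) (simp add: y_def S_def)
qed

lemma cyclic_cosine_bound:
  assumes "quadrilateral_sides a b c d"
  shows "((a^2 + b^2 - c^2 - d^2) / (2 * (a*b + c*d)))^2 < 1"
proof -
  note sides = assms[unfolded quadrilateral_sides_def]
  define K where "K = a*b + c*d"
  have "0 < K"
    using sides by (simp add: K_def add_pos_pos)
  have "2*K - (a^2 + b^2 - c^2 - d^2) = (c+d+a-b) * (c+d-a+b)"
    "2*K + (a^2 + b^2 - c^2 - d^2) = (a+b+c-d) * (a+b-c+d)"
    by (simp_all add: K_def algebra_simps power2_eq_square)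
  moreover have "0 < (c+d+a-b) * (c+d-a+b)" "0 < (a+b+c-d) * (a+b-c+d)"
    using sides by simp_all
  ultimately have "\<bar>a^2 + b^2 - c^2 - d^2\<bar> < 2*K"
    by linarith
  then have "\<bar>(a^2 + b^2 - c^2 - d^2) / (2*K)\<bar> < 1"
    using \<open>0 < K\<close> by (simp add: abs_divide)
  then show ?thesis
    unfolding K_def by (simp add: abs_square_less_1)
qed

text \<open>The area \<open>(a b + c d) sin B / 2\<close> of the cyclic quadrilateral, where \<open>C = cos B\<close>.\<close>
lemma brahmagupta_area_cyclic:
  assumes "0 \<le> a*b + c*d" "C^2 \<le> 1" "2 * (a*b + c*d) * C = a^2 + b^2 - c^2 - d^2"
  shows "brahmagupta_area a b c d = (a*b + c*d) * sqrt (1 - C^2) / 2"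
proof -
  define K where "K = a*b + c*d"
  have "((K * sqrt (1 - C^2)) / 2)^2 = (K^2 - (K*C)^2) / 4"
    using assms(2) by (simp add: power_mult_distrib power_divide algebra_simps)
  also have "K*C = (a^2 + b^2 - c^2 - d^2) / 2"
    using assms(3) by (simp add: K_def algebra_simps)
  also have "(K^2 - ((a^2 + b^2 - c^2 - d^2) / 2)^2) / 4 =
      ((b+c+d-a)/2) * ((a+c+d-b)/2) * ((a+b+d-c)/2) * ((a+b+c-d)/2)"
    unfolding brahmagupta_product_eq K_def ..
  finally show ?thesis
    using assms(1,2) unfolding brahmagupta_area_def K_def[symmetric] by (simp add: real_sqrt_unique)
qed

text \<open>The angles at \<open>z2\<close> and \<open>z4\<close> are supplementary, with the cosine \<open>C\<close> at \<open>z2\<close> chosen so that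
  the triangles \<open>z1 z2 z3\<close> and \<open>z1 z4 z3\<close> give the diagonal \<open>z1 z3\<close> the same length.\<close>
lemma cyclic_quadrilateral_exists:
  assumes "quadrilateral_sides a b c d"
  obtains z1 z2 z3 z4 where "is_quadrilateral z1 z2 z3 z4 a b c d"
    and "quad_area z1 z2 z3 z4 = brahmagupta_area a b c d"
proof -
  note sides = assms[unfolded quadrilateral_sides_def]
  define C where "C = (a^2 + b^2 - c^2 - d^2) / (2 * (a*b + c*d))"
  define S where "S = sqrt (1 - C^2)"
  define p where "p = sqrt (a^2 + b^2 - 2*a*b*C)"
  have C: "C^2 < 1"
    using cyclic_cosine_bound[OF assms] by (simp add: C_def)
  have "0 < a*b + c*d"
    using sides by (simp add: add_pos_pos)
  then have KC: "2 * (a*b + c*d) * C = a^2 + b^2 - c^2 - d^2"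
    by (simp add: C_def)
  then have p_other: "p = sqrt (d^2 + c^2 - 2*d*c*(-C))"
    unfolding p_def by (simp add: algebra_simps)
  obtain u where u: "cmod u = a" "cmod (of_real p - u) = b" "Im u = a * b * S / p"
    using triangle_law_of_cosines[of a b C] sides C unfolding p_def S_def by auto
  obtain z4 where z4: "cmod z4 = d" "cmod (of_real p - z4) = c" "Im z4 = d * c * S / p"
    using triangle_law_of_cosines[of d c "-C"] sides C unfolding p_other S_def by auto
  have p: "0 < p"
    using triangle_law_of_cosines[of a b C] sides C unfolding p_def by auto
  define z2 where "z2 = cnj u"
  have Im: "Im z2 < 0" "0 < Im z4"
    using u(3) z4(3) sides p C by (simp_all add: z2_def S_def)
  have "of_real p - z2 = cnj (of_real p - u)"
    by (simp add: z2_def)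
  then have "cmod (z2 - 0) = a" "cmod (of_real p - z2) = b" "cmod (z4 - of_real p) = c"
    "cmod (0 - z4) = d"
    using u z4 by (simp_all only: complex_mod_cnj z2_def diff_zero diff_0 norm_minus_commute
        norm_minus_cancel)
  then have "is_quadrilateral 0 z2 (of_real p) z4 a b c d"
    unfolding is_quadrilateral_def using quadrilateral_across_diagonal[OF p Im] by blast
  moreover have "quad_area 0 z2 (of_real p) z4 = (a*b + c*d) * S / 2"
    unfolding quadrilateral_across_diagonal(3)[OF p Im] using u(3) z4(3) p
    by (simp add: z2_def field_simps)
  moreover have "(a*b + c*d) * S / 2 = brahmagupta_area a b c d"
    using brahmagupta_area_cyclic[OF _ _ KC] sides C by (simp add: S_def)
  ultimately show ?thesis
    using that by metis
qed

lemma max_quad_area_eq_brahmagupta: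
  assumes "quadrilateral_sides a b c d"
  shows "max_quad_area a b c d = brahmagupta_area a b c d"
  unfolding max_quad_area_def
proof (rule cSup_eq_maximum)
  obtain z1 z2 z3 z4 where "is_quadrilateral z1 z2 z3 z4 a b c d"
    "quad_area z1 z2 z3 z4 = brahmagupta_area a b c d"
    using cyclic_quadrilateral_exists[OF assms] .
  then show "brahmagupta_area a b c d \<in>
      {quad_area z1 z2 z3 z4 | z1 z2 z3 z4. is_quadrilateral z1 z2 z3 z4 a b c d}"
    by (metis (mono_tags, lifting) mem_Collect_eq)
  show "x \<le> brahmagupta_area a b c d"
    if "x \<in> {quad_area z1 z2 z3 z4 | z1 z2 z3 z4. is_quadrilateral z1 z2 z3 z4 a b c d}" for x
    using that quad_area_le_brahmagupta unfolding is_quadrilateral_def by blast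
qed

lemma max_quad_area_degenerate:
  assumes "\<not> quadrilateral_sides a b c d"
  shows "max_quad_area a b c d = Sup {}"
proof -
  have "{quad_area z1 z2 z3 z4 | z1 z2 z3 z4. is_quadrilateral z1 z2 z3 z4 a b c d} = {}"
    using assms is_quadrilateral_imp_quadrilateral_sides by blast
  then show ?thesis
    unfolding max_quad_area_def by simp
qed

section \<open>Nonnegative integrals over the line and over \<open>\<real>\<^sup>3\<close>\<close>

lemma borel_measurable_triple_components[measurable]:
  "(\<lambda>p::real \<times> real \<times> real. fst p) \<in> borel_measurable borel"
  "(\<lambda>p::real \<times> real \<times> real. fst (snd p)) \<in> borel_measurable borel"
  "(\<lambda>p::real \<times> real \<times> real. snd (snd p)) \<in> borel_measurable borel"
  by (rule borel_measurable_continuous_onI, intro continuous_intros)+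

lemma nn_integral_lborel3:
  fixes f :: "real \<times> real \<times> real \<Rightarrow> ennreal"
  assumes [measurable]: "f \<in> borel_measurable borel"
  shows "(\<integral>\<^sup>+p. f p \<partial>lborel) = (\<integral>\<^sup>+x. \<integral>\<^sup>+y. \<integral>\<^sup>+z. f (x, y, z) \<partial>lborel \<partial>lborel \<partial>lborel)"
proof -
  have pair: "(\<integral>\<^sup>+p. g p \<partial>lborel) = (\<integral>\<^sup>+x. \<integral>\<^sup>+q. g (x, q) \<partial>lborel \<partial>lborel)"
    if [measurable]: "g \<in> borel_measurable borel" for g :: "real \<times> 'a::euclidean_space \<Rightarrow> ennreal"
    unfolding lborel_prod[symmetric]
    by (rule lborel.nn_integral_fst[symmetric]) (simp add: lborel_prod)
  show ?thesis
    unfolding pair[OF assms] by (subst pair) simp_all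
qed

lemma borel_measurable_permute3:
  fixes f :: "real \<times> real \<times> real \<Rightarrow> ennreal"
  assumes "f \<in> borel_measurable borel"
  shows "(\<lambda>(x, y, z). f (y, x, z)) \<in> borel_measurable borel"
    and "(\<lambda>(x, y, z). f (x, z, y)) \<in> borel_measurable borel"
proof -
  have "(\<lambda>p. f (fst (snd p), fst p, snd (snd p))) \<in> borel_measurable borel"
    "(\<lambda>p. f (fst p, snd (snd p), fst (snd p))) \<in> borel_measurable borel"
    by (rule measurable_compose[OF _ assms], rule borel_measurable_continuous_onI,
        intro continuous_intros)+
  then show "(\<lambda>(x, y, z). f (y, x, z)) \<in> borel_measurable borel"
    and "(\<lambda>(x, y, z). f (x, z, y)) \<in> borel_measurable borel"
    by (simp_all add: case_prod_beta)
qed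

lemma nn_integral_lborel3_swap12:
  fixes f :: "real \<times> real \<times> real \<Rightarrow> ennreal"
  assumes [measurable]: "f \<in> borel_measurable borel"
  shows "(\<integral>\<^sup>+p. f p \<partial>lborel) = (\<integral>\<^sup>+(x, y, z). f (y, x, z) \<partial>lborel)"
proof -
  have m: "(\<lambda>(x, y). \<integral>\<^sup>+z. f (x, y, z) \<partial>lborel) \<in> borel_measurable (lborel \<Otimes>\<^sub>M lborel)"
    by measurable
  show ?thesis
    using lborel_pair.Fubini'[OF m] borel_measurable_permute3(1)[OF assms]
    by (simp add: nn_integral_lborel3)
qed

lemma nn_integral_lborel3_swap23:
  fixes f :: "real \<times> real \<times> real \<Rightarrow> ennreal"
  assumes [measurable]: "f \<in> borel_measurable borel"
  shows "(\<integral>\<^sup>+p. f p \<partial>lborel) = (\<integral>\<^sup>+(x, y, z). f (x, z, y) \<partial>lborel)"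
proof -
  have m: "(\<lambda>(y, z). f (x, y, z)) \<in> borel_measurable (lborel \<Otimes>\<^sub>M lborel)" for x
    by measurable
  have "(\<integral>\<^sup>+y. \<integral>\<^sup>+z. f (x, y, z) \<partial>lborel \<partial>lborel) =
      (\<integral>\<^sup>+y. \<integral>\<^sup>+z. f (x, z, y) \<partial>lborel \<partial>lborel)" for x
    using lborel_pair.Fubini'[OF m[of x]] by simp
  then show ?thesis
    using borel_measurable_permute3(2)[OF assms] by (simp add: nn_integral_lborel3)
qed

lemma AE_lborel_hyperplane:
  fixes a :: "'a::euclidean_space"
  assumes "a \<noteq> 0"
  shows "AE p in lborel. a \<bullet> p \<noteq> b"
proof -
  have "negligible {p. a \<bullet> p = b}"
    using assms by (simp add: negligible_hyperplane)
  moreover have "{p. a \<bullet> p = b} \<in> sets lborel"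
    using closed_hyperplane[of a b] by simp
  ultimately have "{p. a \<bullet> p = b} \<in> null_sets lborel"
    by (simp add: negligible_iff_null_sets null_sets_completion_iff)
  then show ?thesis
    using AE_not_in by fastforce
qed

lemma AE_lborel3_distinct:
  "AE p in lborel. fst p \<noteq> fst (snd p) \<and> fst (snd p) \<noteq> snd (snd p) \<and>
     fst p \<noteq> snd (snd (p :: real \<times> real \<times> real))"
proof -
  have "AE p in lborel. (1, -1, 0) \<bullet> (p :: real \<times> real \<times> real) \<noteq> 0"
    "AE p in lborel. (0, 1, -1) \<bullet> (p :: real \<times> real \<times> real) \<noteq> 0"
    "AE p in lborel. (1, 0, -1) \<bullet> (p :: real \<times> real \<times> real) \<noteq> 0"
    by (rule AE_lborel_hyperplane; simp add: zero_prod_def)+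
  then show ?thesis
    by eventually_elim auto
qed

lemma AE_lborel3_coordinates_ne:
  "AE p in lborel. fst p \<noteq> c \<and> fst (snd p) \<noteq> c \<and> snd (snd (p :: real \<times> real \<times> real)) \<noteq> c"
proof -
  have "AE p in lborel. (1, 0, 0) \<bullet> (p :: real \<times> real \<times> real) \<noteq> c"
    "AE p in lborel. (0, 1, 0) \<bullet> (p :: real \<times> real \<times> real) \<noteq> c"
    "AE p in lborel. (0, 0, 1) \<bullet> (p :: real \<times> real \<times> real) \<noteq> c"
    by (rule AE_lborel_hyperplane; simp add: zero_prod_def)+
  then show ?thesis
    by eventually_elim auto
qed

lemma nn_integral_lborel3_indicator_swap12:
  fixes F :: "real \<times> real \<times> real \<Rightarrow> ennreal"
  assumes [measurable]: "F \<in> borel_measurable borel" "Measurable.pred borel (\<lambda>(x, y, z). P y x z)"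
    and swap: "\<And>x y z. F (y, x, z) = F (x, y, z)"
  shows "(\<integral>\<^sup>+p. F p * indicator {(x, y, z). P y x z} p \<partial>lborel) =
    (\<integral>\<^sup>+p. F p * indicator {(x, y, z). P x y z} p \<partial>lborel)"
proof -
  have "(\<integral>\<^sup>+p. F p * indicator {(x, y, z). P y x z} p \<partial>lborel) =
      (\<integral>\<^sup>+(x, y, z). F (y, x, z) * indicator {(x, y, z). P y x z} (y, x, z) \<partial>lborel)"
    by (rule nn_integral_lborel3_swap12) measurable
  also have "\<dots> = (\<integral>\<^sup>+p. F p * indicator {(x, y, z). P x y z} p \<partial>lborel)"
    by (intro nn_integral_cong) (auto simp: swap indicator_def)
  finally show ?thesis .
qed

lemma nn_integral_lborel3_indicator_swap23:
  fixes F :: "real \<times> real \<times> real \<Rightarrow> ennreal"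
  assumes [measurable]: "F \<in> borel_measurable borel" "Measurable.pred borel (\<lambda>(x, y, z). P x z y)"
    and swap: "\<And>x y z. F (x, z, y) = F (x, y, z)"
  shows "(\<integral>\<^sup>+p. F p * indicator {(x, y, z). P x z y} p \<partial>lborel) =
    (\<integral>\<^sup>+p. F p * indicator {(x, y, z). P x y z} p \<partial>lborel)"
proof -
  have "(\<integral>\<^sup>+p. F p * indicator {(x, y, z). P x z y} p \<partial>lborel) =
      (\<integral>\<^sup>+(x, y, z). F (x, z, y) * indicator {(x, y, z). P x z y} (x, z, y) \<partial>lborel)"
    by (rule nn_integral_lborel3_swap23) measurable
  also have "\<dots> = (\<integral>\<^sup>+p. F p * indicator {(x, y, z). P x y z} p \<partial>lborel)"
    by (intro nn_integral_cong) (auto simp: swap indicator_def)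
  finally show ?thesis .
qed

lemma nn_integral_lborel3_symmetric:
  fixes F :: "real \<times> real \<times> real \<Rightarrow> ennreal"
  assumes [measurable]: "F \<in> borel_measurable borel"
    and swap12: "\<And>x y z. F (y, x, z) = F (x, y, z)"
    and swap23: "\<And>x y z. F (x, z, y) = F (x, y, z)"
  shows "(\<integral>\<^sup>+p. F p \<partial>lborel) =
    6 * (\<integral>\<^sup>+p. F p * indicator {(x, y, z). x < y \<and> y < z} p \<partial>lborel)"
proof -
  define I where "I P = (\<integral>\<^sup>+p. F p * indicator {(x, y, z). P x y z} p \<partial>lborel)"
    for P :: "real \<Rightarrow> real \<Rightarrow> real \<Rightarrow> bool"
  have "AE p in lborel. F p =
      F p * indicator {(x, y, z). x < y \<and> y < z} p + F p * indicator {(x, y, z). y < x \<and> x < z} p +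
      F p * indicator {(x, y, z). x < z \<and> z < y} p + F p * indicator {(x, y, z). y < z \<and> z < x} p +
      F p * indicator {(x, y, z). z < x \<and> x < y} p + F p * indicator {(x, y, z). z < y \<and> y < x} p"
    using AE_lborel3_distinct by eventually_elim (auto split: split_indicator)
  then have "(\<integral>\<^sup>+p. F p \<partial>lborel) =
      I (\<lambda>x y z. x < y \<and> y < z) + I (\<lambda>x y z. y < x \<and> x < z) + I (\<lambda>x y z. x < z \<and> z < y) +
      I (\<lambda>x y z. y < z \<and> z < x) + I (\<lambda>x y z. z < x \<and> x < y) + I (\<lambda>x y z. z < y \<and> y < x)"
    unfolding I_def by (simp add: nn_integral_cong_AE nn_integral_add)
  moreover have "I (\<lambda>x y z. y < x \<and> x < z) = I (\<lambda>x y z. x < y \<and> y < z)"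
    "I (\<lambda>x y z. y < z \<and> z < x) = I (\<lambda>x y z. x < z \<and> z < y)"
    "I (\<lambda>x y z. z < y \<and> y < x) = I (\<lambda>x y z. z < x \<and> x < y)"
    unfolding I_def by (rule nn_integral_lborel3_indicator_swap12; simp add: swap12)+
  moreover have "I (\<lambda>x y z. x < z \<and> z < y) = I (\<lambda>x y z. x < y \<and> y < z)"
    "I (\<lambda>x y z. z < x \<and> x < y) = I (\<lambda>x y z. y < x \<and> x < z)"
    unfolding I_def by (rule nn_integral_lborel3_indicator_swap23; simp add: swap23)+
  moreover have "(6::ennreal) = 1 + 1 + 1 + 1 + 1 + 1"
    by simp
  ultimately show ?thesis
    unfolding I_def by (simp only: distrib_right mult_1_left)
qed

lemma nn_integral_lborel_reflect:
  fixes f :: "real \<Rightarrow> ennreal"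
  assumes "f \<in> borel_measurable borel"
  shows "(\<integral>\<^sup>+x. f x \<partial>lborel) = (\<integral>\<^sup>+x. f (t - x) \<partial>lborel)"
  using nn_integral_real_affine[OF assms, of "-1" t] by simp

lemma nn_integral_lborel_translate:
  fixes f :: "real \<Rightarrow> ennreal"
  assumes "f \<in> borel_measurable borel"
  shows "(\<integral>\<^sup>+x. f x \<partial>lborel) = (\<integral>\<^sup>+x. f (t + x) \<partial>lborel)"
  using nn_integral_real_affine[OF assms, of 1 t] by simp

lemma nn_integral_lborel_reflect_half:
  fixes F :: "real \<Rightarrow> ennreal"
  assumes [measurable]: "F \<in> borel_measurable borel" and reflect: "\<And>s. F (1 - s) = F s"
  shows "(\<integral>\<^sup>+s. F s \<partial>lborel) = 2 * (\<integral>\<^sup>+s. F s * indicator {..1/2} s \<partial>lborel)"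
proof -
  have "(\<integral>\<^sup>+s. F s \<partial>lborel) =
      (\<integral>\<^sup>+s. F s * indicator {..1/2} s + F s * indicator {1/2<..} s \<partial>lborel)"
    by (intro nn_integral_cong) (auto simp: indicator_def)
  also have "\<dots> = (\<integral>\<^sup>+s. F s * indicator {..1/2} s \<partial>lborel) +
      (\<integral>\<^sup>+s. F s * indicator {1/2<..} s \<partial>lborel)"
    by (intro nn_integral_add) simp_all
  also have "(\<integral>\<^sup>+s. F s * indicator {1/2<..} s \<partial>lborel) =
      (\<integral>\<^sup>+s. F (1 - s) * indicator {1/2<..} (1 - s) \<partial>lborel)"
    by (rule nn_integral_lborel_reflect) simp
  also have "\<dots> = (\<integral>\<^sup>+s. F s * indicator {..1/2} s \<partial>lborel)"
  proof (rule nn_integral_cong_AE)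
    show "AE s in lborel. F (1 - s) * indicator {1/2<..} (1 - s) = F s * indicator {..1/2} s"
      using AE_lborel_singleton[of "1/2 :: real"]
      by eventually_elim (auto simp: reflect indicator_def)
  qed
  finally show ?thesis
    by (simp only: mult_2)
qed

lemma nn_integral_uniform_measure_uniform_measure:
  assumes [measurable]: "f \<in> borel_measurable M" "A \<in> sets M" "B \<in> sets M"
    and "emeasure M A \<noteq> 0" "emeasure M A \<noteq> \<infinity>"
  shows "(\<integral>\<^sup>+x. f x \<partial>uniform_measure (uniform_measure M A) B) =
    (\<integral>\<^sup>+x. f x * indicator (A \<inter> B) x \<partial>M) / emeasure M (A \<inter> B)"
proof -
  have "(\<integral>\<^sup>+x. f x \<partial>uniform_measure (uniform_measure M A) B) =
      (\<integral>\<^sup>+x. f x * indicator B x \<partial>uniform_measure M A) / emeasure (uniform_measure M A) B"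
    by (rule nn_integral_uniform_measure) simp_all
  also have "(\<integral>\<^sup>+x. f x * indicator B x \<partial>uniform_measure M A) =
      (\<integral>\<^sup>+x. f x * indicator B x * indicator A x \<partial>M) / emeasure M A"
    by (rule nn_integral_uniform_measure) simp_all
  also have "(\<integral>\<^sup>+x. f x * indicator B x * indicator A x \<partial>M) = (\<integral>\<^sup>+x. f x * indicator (A \<inter> B) x \<partial>M)"
    by (intro nn_integral_cong) (simp split: split_indicator)
  also have "emeasure (uniform_measure M A) B = emeasure M (A \<inter> B) / emeasure M A"
    by simp
  also have "X / emeasure M A / (Y / emeasure M A) = X / Y" for X Y
    using assms(4,5) divide_ennreal_def divide_mult_eq by auto
  finally show ?thesis .
qed

section \<open>Reduction to a self-convolution\<close>

definition min3 :: "real \<times> real \<times> real \<Rightarrow> real" where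
  "min3 p = min (fst p) (min (fst (snd p)) (snd (snd p)))"

definition max3 :: "real \<times> real \<times> real \<Rightarrow> real" where
  "max3 p = max (fst p) (max (fst (snd p)) (snd (snd p)))"

definition mid3 :: "real \<times> real \<times> real \<Rightarrow> real" where
  "mid3 p = fst p + fst (snd p) + snd (snd p) - min3 p - max3 p"

lemma pieces_eq: "pieces p = [min3 p, mid3 p - min3 p, max3 p - mid3 p, 1 - max3 p]"
  by (cases p) (simp add: pieces_def min3_def mid3_def max3_def Let_def)

lemma
  shows min3_swap12: "min3 (y, x, z) = min3 (x, y, z)"
    and min3_swap23: "min3 (x, z, y) = min3 (x, y, z)"
    and max3_swap12: "max3 (y, x, z) = max3 (x, y, z)"
    and max3_swap23: "max3 (x, z, y) = max3 (x, y, z)"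
    and mid3_swap12: "mid3 (y, x, z) = mid3 (x, y, z)"
    and mid3_swap23: "mid3 (x, z, y) = mid3 (x, y, z)"
  by (auto simp: min3_def max3_def mid3_def min_def max_def)

lemma min3_mid3_max3_sorted:
  "x \<le> y \<Longrightarrow> y \<le> z \<Longrightarrow> min3 (x, y, z) = x \<and> mid3 (x, y, z) = y \<and> max3 (x, y, z) = z"
  by (auto simp: min3_def max3_def mid3_def min_def max_def)

lemma borel_measurable_min3_mid3_max3[measurable]:
  "min3 \<in> borel_measurable borel" "mid3 \<in> borel_measurable borel" "max3 \<in> borel_measurable borel"
  unfolding min3_def[abs_def] mid3_def[abs_def] max3_def[abs_def]
  by (rule borel_measurable_continuous_onI, intro continuous_intros)+

definition short_pieces :: "real \<Rightarrow> real \<Rightarrow> real \<Rightarrow> real \<Rightarrow> bool" where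
  "short_pieces a b c d \<longleftrightarrow>
     0 < a \<and> a < 1/2 \<and> 0 < b \<and> b < 1/2 \<and> 0 < c \<and> c < 1/2 \<and> 0 < d \<and> d < 1/2"

text \<open>The weight is evaluated at the factors \<open>1/2 - a, \<dots>, 1/2 - d\<close> of Brahmagupta's formula
  for perimeter 1: the weight \<open>1\<close> gives the probability of the event, and \<open>sqrt \<bar>u v\<bar>\<close> the
  area.\<close>
definition split_weight :: "(real \<Rightarrow> real \<Rightarrow> real) \<Rightarrow> real \<Rightarrow> real \<Rightarrow> real \<Rightarrow> real \<Rightarrow> real" where
  "split_weight w a b c d =
     (if short_pieces a b c d then w (1/2 - a) (1/2 - b) * w (1/2 - c) (1/2 - d) else 0)"

definition pieces_weight :: "(real \<Rightarrow> real \<Rightarrow> real) \<Rightarrow> real \<times> real \<times> real \<Rightarrow> real" where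
  "pieces_weight w p = split_weight w (min3 p) (mid3 p - min3 p) (max3 p - mid3 p) (1 - max3 p)"

definition short_split :: "real \<times> real \<times> real \<Rightarrow> bool" where
  "short_split p \<longleftrightarrow> short_pieces (min3 p) (mid3 p - min3 p) (max3 p - mid3 p) (1 - max3 p)"

lemma measurable_short_split[measurable]: "Measurable.pred borel short_split"
  unfolding short_split_def[abs_def] short_pieces_def by measurable

lemma pieces_weight_eq_zero: "\<not> short_split p \<Longrightarrow> pieces_weight w p = 0"
  by (simp add: pieces_weight_def split_weight_def short_split_def)

definition antidiagonal_kernel :: "(real \<Rightarrow> real \<Rightarrow> real) \<Rightarrow> real \<Rightarrow> real \<Rightarrow> real" where
  "antidiagonal_kernel w s u =
     (if 0 < u \<and> u < 1/2 \<and> 0 < s - u \<and> s - u < 1/2 then w u (s - u) else 0)"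

definition antidiagonal_integral :: "(real \<Rightarrow> real \<Rightarrow> real) \<Rightarrow> real \<Rightarrow> ennreal" where
  "antidiagonal_integral w s = (\<integral>\<^sup>+u. ennreal (antidiagonal_kernel w s u) \<partial>lborel)"

lemma pieces_weight_sorted:
  assumes "x \<le> y" "y \<le> z"
  shows "pieces_weight w (x, y, z) = split_weight w x (y - x) (z - y) (1 - z)"
  using min3_mid3_max3_sorted[OF assms] by (simp add: pieces_weight_def)

lemma
  shows pieces_weight_swap12: "pieces_weight w (y, x, z) = pieces_weight w (x, y, z)"
    and pieces_weight_swap23: "pieces_weight w (x, z, y) = pieces_weight w (x, y, z)"
  by (simp_all add: pieces_weight_def min3_swap12 min3_swap23 mid3_swap12 mid3_swap23
      max3_swap12 max3_swap23)

lemma split_weight_shifted: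
  "split_weight w (1/2 - u1) (1/2 - u2) (1/2 - u3) (u1 + u2 + u3 - 1/2) =
     antidiagonal_kernel w (u1 + u2) u1 * antidiagonal_kernel w (1 - u1 - u2) u3"
  unfolding split_weight_def antidiagonal_kernel_def short_pieces_def by (auto simp: algebra_simps)

lemma antidiagonal_integral_nonpos:
  assumes "s \<le> 0"
  shows "antidiagonal_integral w s = 0"
proof -
  have "antidiagonal_kernel w s u = 0" for u
    using assms by (auto simp: antidiagonal_kernel_def)
  then show ?thesis
    by (simp add: antidiagonal_integral_def)
qed

locale nonneg_weight =
  fixes w :: "real \<Rightarrow> real \<Rightarrow> real"
  assumes borel_measurable_weight: "case_prod w \<in> borel_measurable borel"
    and weight_nonneg: "0 \<le> w u v"
begin

lemma measurable_weight[measurable (raw)]: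
  assumes "f \<in> borel_measurable M" "g \<in> borel_measurable M"
  shows "(\<lambda>x. w (f x) (g x)) \<in> borel_measurable M"
proof -
  have "case_prod w \<in> borel_measurable (borel \<Otimes>\<^sub>M borel)"
    using borel_measurable_weight by (simp add: borel_prod)
  from measurable_compose[OF measurable_Pair[OF assms] this] show ?thesis
    by simp
qed

lemma measurable_split_weight[measurable (raw)]:
  assumes [measurable]: "a \<in> borel_measurable M" "b \<in> borel_measurable M"
    "c \<in> borel_measurable M" "d \<in> borel_measurable M"
  shows "(\<lambda>x. split_weight w (a x) (b x) (c x) (d x)) \<in> borel_measurable M"
  unfolding split_weight_def short_pieces_def by measurable

lemma borel_measurable_pieces_weight[measurable]: "pieces_weight w \<in> borel_measurable borel"
  unfolding pieces_weight_def[abs_def] by measurable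

lemma measurable_antidiagonal_kernel[measurable (raw)]:
  assumes [measurable]: "f \<in> borel_measurable M" "g \<in> borel_measurable M"
  shows "(\<lambda>x. antidiagonal_kernel w (f x) (g x)) \<in> borel_measurable M"
  unfolding antidiagonal_kernel_def by measurable

lemma borel_measurable_antidiagonal_integral[measurable]:
  "antidiagonal_integral w \<in> borel_measurable borel"
  unfolding antidiagonal_integral_def[abs_def] by measurable

lemma pieces_weight_nonneg: "0 \<le> pieces_weight w p"
  by (simp add: pieces_weight_def split_weight_def weight_nonneg)

lemma antidiagonal_kernel_nonneg: "0 \<le> antidiagonal_kernel w s u"
  by (simp add: antidiagonal_kernel_def weight_nonneg)

lemma nn_integral_pieces_weight_sorted:
  "(\<integral>\<^sup>+p. pieces_weight w p \<partial>lborel) =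
     6 * (\<integral>\<^sup>+x. \<integral>\<^sup>+y. \<integral>\<^sup>+z. split_weight w x (y - x) (z - y) (1 - z) \<partial>lborel \<partial>lborel \<partial>lborel)"
proof -
  have "(\<integral>\<^sup>+p. pieces_weight w p \<partial>lborel) =
      6 * (\<integral>\<^sup>+p. ennreal (pieces_weight w p) * indicator {(x, y, z). x < y \<and> y < z} p \<partial>lborel)"
    by (rule nn_integral_lborel3_symmetric)
      (simp_all add: pieces_weight_swap12 pieces_weight_swap23)
  also have "(\<integral>\<^sup>+p. ennreal (pieces_weight w p) * indicator {(x, y, z). x < y \<and> y < z} p \<partial>lborel) =
      (\<integral>\<^sup>+x. \<integral>\<^sup>+y. \<integral>\<^sup>+z. split_weight w x (y - x) (z - y) (1 - z) \<partial>lborel \<partial>lborel \<partial>lborel)"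
  proof -
    have "ennreal (pieces_weight w (x, y, z)) * indicator {(x, y, z). x < y \<and> y < z} (x, y, z) =
        ennreal (split_weight w x (y - x) (z - y) (1 - z))" for x y z
      by (cases "x < y \<and> y < z")
        (auto simp: pieces_weight_sorted split_weight_def short_pieces_def)
    then show ?thesis
      by (simp add: nn_integral_lborel3)
  qed
  finally show ?thesis .
qed

lemma nn_integral_sorted_split_weight_substitution:
  "(\<integral>\<^sup>+x. \<integral>\<^sup>+y. \<integral>\<^sup>+z. ennreal (split_weight w x (y - x) (z - y) (1 - z))
      \<partial>lborel \<partial>lborel \<partial>lborel) =
   (\<integral>\<^sup>+u1. \<integral>\<^sup>+u2. \<integral>\<^sup>+u3. ennreal (split_weight w (1/2 - u1) (1/2 - u2) (1/2 - u3)
      (u1 + u2 + u3 - 1/2)) \<partial>lborel \<partial>lborel \<partial>lborel)"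
proof -
  have "(\<integral>\<^sup>+x. \<integral>\<^sup>+y. \<integral>\<^sup>+z. ennreal (split_weight w x (y - x) (z - y) (1 - z))
        \<partial>lborel \<partial>lborel \<partial>lborel) =
      (\<integral>\<^sup>+x. \<integral>\<^sup>+y. \<integral>\<^sup>+u3. ennreal (split_weight w x (y - x) (1/2 - u3) (1/2 - y + u3))
        \<partial>lborel \<partial>lborel \<partial>lborel)"
  proof (rule nn_integral_cong, rule nn_integral_cong)
    fix x y :: real
    show "(\<integral>\<^sup>+z. ennreal (split_weight w x (y - x) (z - y) (1 - z)) \<partial>lborel) =
        (\<integral>\<^sup>+u3. ennreal (split_weight w x (y - x) (1/2 - u3) (1/2 - y + u3)) \<partial>lborel)"
      by (subst nn_integral_lborel_reflect[where t = "y + 1/2"]) (simp_all add: algebra_simps)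
  qed
  also have "\<dots> = (\<integral>\<^sup>+x. \<integral>\<^sup>+u2. \<integral>\<^sup>+u3.
      ennreal (split_weight w x (1/2 - u2) (1/2 - u3) (u2 + u3 - x)) \<partial>lborel \<partial>lborel \<partial>lborel)"
  proof (rule nn_integral_cong)
    fix x :: real
    show "(\<integral>\<^sup>+y. \<integral>\<^sup>+u3. ennreal (split_weight w x (y - x) (1/2 - u3) (1/2 - y + u3))
          \<partial>lborel \<partial>lborel) =
        (\<integral>\<^sup>+u2. \<integral>\<^sup>+u3. ennreal (split_weight w x (1/2 - u2) (1/2 - u3) (u2 + u3 - x))
          \<partial>lborel \<partial>lborel)"
      by (subst nn_integral_lborel_reflect[where t = "x + 1/2"]) (simp_all add: algebra_simps)
  qed
  also have "\<dots> = (\<integral>\<^sup>+u1. \<integral>\<^sup>+u2. \<integral>\<^sup>+u3. ennreal (split_weight w (1/2 - u1) (1/2 - u2) (1/2 - u3)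
      (u1 + u2 + u3 - 1/2)) \<partial>lborel \<partial>lborel \<partial>lborel)"
    by (subst nn_integral_lborel_reflect[where t = "1/2"]) (simp_all add: algebra_simps)
  finally show ?thesis .
qed

lemma nn_integral_split_weight_convolution:
  "(\<integral>\<^sup>+u1. \<integral>\<^sup>+u2. \<integral>\<^sup>+u3. ennreal (split_weight w (1/2 - u1) (1/2 - u2) (1/2 - u3)
      (u1 + u2 + u3 - 1/2)) \<partial>lborel \<partial>lborel \<partial>lborel) =
   (\<integral>\<^sup>+s. antidiagonal_integral w s * antidiagonal_integral w (1 - s) \<partial>lborel)"
proof -
  let ?k = "antidiagonal_kernel w" and ?K = "antidiagonal_integral w"
  have "(\<integral>\<^sup>+u1. \<integral>\<^sup>+u2. \<integral>\<^sup>+u3. ennreal (split_weight w (1/2 - u1) (1/2 - u2) (1/2 - u3)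
      (u1 + u2 + u3 - 1/2)) \<partial>lborel \<partial>lborel \<partial>lborel) =
      (\<integral>\<^sup>+u1. \<integral>\<^sup>+u2. ennreal (?k (u1 + u2) u1) * ?K (1 - u1 - u2) \<partial>lborel \<partial>lborel)"
    unfolding split_weight_shifted antidiagonal_integral_def
    by (simp add: ennreal_mult antidiagonal_kernel_nonneg nn_integral_cmult)
  also have "\<dots> = (\<integral>\<^sup>+u1. \<integral>\<^sup>+s. ennreal (?k s u1) * ?K (1 - s) \<partial>lborel \<partial>lborel)"
  proof (rule nn_integral_cong)
    fix u1 :: real
    show "(\<integral>\<^sup>+u2. ennreal (?k (u1 + u2) u1) * ?K (1 - u1 - u2) \<partial>lborel) =
        (\<integral>\<^sup>+s. ennreal (?k s u1) * ?K (1 - s) \<partial>lborel)"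
      by (subst nn_integral_lborel_translate[where t = "- u1"]) (simp_all add: algebra_simps)
  qed
  also have "\<dots> = (\<integral>\<^sup>+s. \<integral>\<^sup>+u1. ennreal (?k s u1) * ?K (1 - s) \<partial>lborel \<partial>lborel)"
    by (rule lborel_pair.Fubini') measurable
  also have "\<dots> = (\<integral>\<^sup>+s. ?K s * ?K (1 - s) \<partial>lborel)"
    unfolding antidiagonal_integral_def by (simp add: nn_integral_multc)
  finally show ?thesis .
qed

lemma nn_integral_pieces_weight:
  "(\<integral>\<^sup>+p. pieces_weight w p \<partial>lborel) =
     6 * (\<integral>\<^sup>+s. antidiagonal_integral w s * antidiagonal_integral w (1 - s) \<partial>lborel)"
  unfolding nn_integral_pieces_weight_sorted nn_integral_sorted_split_weight_substitution
    nn_integral_split_weight_convolution ..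

lemma nn_integral_antidiagonal_convolution:
  assumes "\<And>s. 0 < s \<Longrightarrow> s < 1/2 \<Longrightarrow>
    antidiagonal_integral w s * antidiagonal_integral w (1 - s) = ennreal (g s)"
  shows "(\<integral>\<^sup>+s. antidiagonal_integral w s * antidiagonal_integral w (1 - s) \<partial>lborel) =
    2 * (\<integral>\<^sup>+s. ennreal (g s) * indicator {0..1/2} s \<partial>lborel)"
proof -
  have "(\<integral>\<^sup>+s. antidiagonal_integral w s * antidiagonal_integral w (1 - s) \<partial>lborel) =
      2 * (\<integral>\<^sup>+s. antidiagonal_integral w s * antidiagonal_integral w (1 - s) * indicator {..1/2} s
        \<partial>lborel)"
    by (rule nn_integral_lborel_reflect_half) (simp_all add: mult.commute)
  also have "(\<integral>\<^sup>+s. antidiagonal_integral w s * antidiagonal_integral w (1 - s) * indicator {..1/2} s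
      \<partial>lborel) = (\<integral>\<^sup>+s. ennreal (g s) * indicator {0..1/2} s \<partial>lborel)"
  proof (rule nn_integral_cong_AE)
    show "AE s in lborel. antidiagonal_integral w s * antidiagonal_integral w (1 - s) *
        indicator {..1/2} s = ennreal (g s) * indicator {0..1/2} s"
      using AE_lborel_singleton[of "0 :: real"] AE_lborel_singleton[of "1/2 :: real"]
      by eventually_elim (auto simp: assms antidiagonal_integral_nonpos indicator_def)
  qed
  finally show ?thesis .
qed

end

section \<open>Integrals along antidiagonals\<close>

lemma nn_integral_Icc_FTC:
  fixes f F :: "real \<Rightarrow> real"
  assumes "a \<le> b" "continuous_on {a..b} F"
    and "\<And>x. a < x \<Longrightarrow> x < b \<Longrightarrow> (F has_real_derivative f x) (at x)"
    and "\<And>x. a \<le> x \<Longrightarrow> x \<le> b \<Longrightarrow> 0 \<le> f x"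
  shows "(\<integral>\<^sup>+x. ennreal (f x) * indicator {a..b} x \<partial>lborel) = ennreal (F b - F a)"
proof -
  have "(f has_integral F b - F a) {a..b}"
    using assms(3) by (intro fundamental_theorem_of_calculus_interior[OF assms(1,2)])
      (auto simp: has_real_derivative_iff_has_vector_derivative[symmetric])
  then show ?thesis
    using assms(4) by (intro nn_integral_has_integral_lebesgue') auto
qed

definition semicircle_primitive :: "real \<Rightarrow> real \<Rightarrow> real" where
  "semicircle_primitive s u = (2*u - s)/4 * sqrt (u*(s - u)) + s^2/8 * arcsin ((2*u - s)/s)"

lemma has_real_derivative_semicircle_primitive:
  assumes "0 < u" "u < s"
  shows "(semicircle_primitive s has_real_derivative sqrt (u*(s - u))) (at u)"
proof -
  define R where "R = sqrt (u*(s - u))"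
  have s: "0 < s" and q: "0 < u*(s - u)"
    using assms by simp_all
  have R: "0 < R" "R^2 = u*(s - u)"
    using q by (simp_all add: R_def)
  have bounds: "-1 < (2*u - s)/s" "(2*u - s)/s < 1"
    using assms s by (simp_all add: field_simps)
  have arcsin_root: "sqrt (1 - ((2*u - s)/s)^2) = 2*R/s"
  proof -
    have "1 - ((2*u - s)/s)^2 = (2*R/s)^2"
      using s R(2) by (simp add: field_simps power2_eq_square)
    then show ?thesis
      using R(1) s by simp
  qed
  have "(semicircle_primitive s has_real_derivative
      1/2 * R + (2*u - s)/4 * ((s - 2*u) / (2*R)) + s^2/8 * (2/s / (2*R/s))) (at u)"
    unfolding semicircle_primitive_def[abs_def] R_def
    using q bounds s arcsin_root[unfolded R_def]
    by (auto intro!: derivative_eq_intros simp: field_simps)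
  moreover have "1/2 * R + (2*u - s)/4 * ((s - 2*u) / (2*R)) + s^2/8 * (2/s / (2*R/s)) = R"
    using R s by (simp add: field_simps power2_eq_square)
  ultimately show ?thesis
    by (simp add: R_def)
qed

lemma continuous_on_semicircle_primitive:
  assumes "0 < s" "0 \<le> a" "b \<le> s"
  shows "continuous_on {a..b} (semicircle_primitive s)"
proof -
  have "\<forall>u\<in>{a..b}. -1 \<le> (2*u - s)/s \<and> (2*u - s)/s \<le> 1"
    using assms by (auto simp: field_simps)
  then show ?thesis
    unfolding semicircle_primitive_def[abs_def] using assms by (intro continuous_intros) auto
qed

lemma nn_integral_semicircle:
  assumes "0 < s" "0 \<le> a" "a \<le> b" "b \<le> s"
  shows "(\<integral>\<^sup>+u. ennreal (sqrt (u*(s - u))) * indicator {a..b} u \<partial>lborel) =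
    ennreal (semicircle_primitive s b - semicircle_primitive s a)"
  using assms
  by (intro nn_integral_Icc_FTC continuous_on_semicircle_primitive
      has_real_derivative_semicircle_primitive) auto

lemma nonneg_weight_sqrt: "nonneg_weight (\<lambda>u v. sqrt \<bar>u * v\<bar>)"
  by unfold_locales
    (simp_all add: case_prod_beta' borel_measurable_continuous_onI continuous_intros)

lemma antidiagonal_kernel_sqrt:
  "antidiagonal_kernel (\<lambda>u v. sqrt \<bar>u * v\<bar>) s u =
     (if 0 < u \<and> u < 1/2 \<and> 0 < s - u \<and> s - u < 1/2 then sqrt (u*(s - u)) else 0)"
  by (simp add: antidiagonal_kernel_def)

lemma antidiagonal_integral_sqrt_small:
  assumes "0 < s" "s \<le> 1/2"
  shows "antidiagonal_integral (\<lambda>u v. sqrt \<bar>u * v\<bar>) s = ennreal (pi * s^2 / 8)"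
proof -
  have "antidiagonal_integral (\<lambda>u v. sqrt \<bar>u * v\<bar>) s =
      (\<integral>\<^sup>+u. ennreal (sqrt (u*(s - u))) * indicator {0..s} u \<partial>lborel)"
    unfolding antidiagonal_integral_def antidiagonal_kernel_sqrt
    by (rule nn_integral_cong) (use assms in \<open>auto simp: indicator_def\<close>)
  also have "\<dots> = ennreal (semicircle_primitive s s - semicircle_primitive s 0)"
    using assms by (intro nn_integral_semicircle) auto
  also have "semicircle_primitive s s - semicircle_primitive s 0 = pi * s^2 / 8"
    using assms by (simp add: semicircle_primitive_def field_simps)
  finally show ?thesis .
qed

lemma semicircle_primitive_reflect:
  assumes "0 < s" "0 \<le> u" "u \<le> s"
  shows "semicircle_primitive s (s - u) = - semicircle_primitive s u"
proof -
  have "-1 \<le> (2*u - s)/s" "(2*u - s)/s \<le> 1"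
    using assms by (simp_all add: field_simps)
  moreover have "2*(s - u) - s = - (2*u - s)" "(s - u) * (s - (s - u)) = u * (s - u)"
    by (simp_all add: algebra_simps)
  ultimately show ?thesis
    unfolding semicircle_primitive_def by (simp only: minus_divide_left[symmetric] arcsin_minus)
qed

lemma antidiagonal_integral_sqrt_large:
  assumes "0 < t" "t < 1/2"
  shows "antidiagonal_integral (\<lambda>u v. sqrt \<bar>u * v\<bar>) (1 - t) =
    ennreal (t * sqrt (1 - 2*t) / 4 + (1 - t)^2 / 4 * arcsin (t / (1 - t)))"
proof -
  have "AE u in lborel. u \<noteq> 1/2 - t" "AE u in lborel. u \<noteq> 1/2"
    by (rule AE_lborel_singleton)+
  then have "AE u in lborel. ennreal (antidiagonal_kernel (\<lambda>u v. sqrt \<bar>u * v\<bar>) (1 - t) u) =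
      ennreal (sqrt (u*((1 - t) - u))) * indicator {1/2 - t..1/2} u"
    by eventually_elim (use assms in \<open>auto simp: antidiagonal_kernel_sqrt indicator_def\<close>)
  then have "antidiagonal_integral (\<lambda>u v. sqrt \<bar>u * v\<bar>) (1 - t) =
      (\<integral>\<^sup>+u. ennreal (sqrt (u*((1 - t) - u))) * indicator {1/2 - t..1/2} u \<partial>lborel)"
    unfolding antidiagonal_integral_def by (rule nn_integral_cong_AE)
  also have "\<dots> =
      ennreal (semicircle_primitive (1 - t) (1/2) - semicircle_primitive (1 - t) (1/2 - t))"
    using assms by (intro nn_integral_semicircle) auto
  also have "semicircle_primitive (1 - t) (1/2 - t) = - semicircle_primitive (1 - t) (1/2)"
    using semicircle_primitive_reflect[of "1 - t" "1/2"] assms by simp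
  also have "semicircle_primitive (1 - t) (1/2) - - semicircle_primitive (1 - t) (1/2) =
      t/2 * sqrt (1/2 * (1/2 - t)) + (1 - t)^2/4 * arcsin (t / (1 - t))"
    unfolding semicircle_primitive_def by simp
  also have "sqrt (1/2 * (1/2 - t)) = sqrt (1 - 2*t) / 2"
  proof -
    have "sqrt (1/2 * (1/2 - t)) = sqrt ((1 - 2*t) / 4)"
      by (rule arg_cong[where f = sqrt]) simp
    then show ?thesis
      by (simp only: real_sqrt_divide real_sqrt_four)
  qed
  also have "t/2 * (sqrt (1 - 2*t) / 2) = t * sqrt (1 - 2*t) / 4"
    by simp
  finally show ?thesis .
qed

lemma has_real_derivative_arcsin_ratio:
  assumes "s < 1/2"
  shows "((\<lambda>s. arcsin (s / (1 - s))) has_real_derivative 1 / ((1 - s) * sqrt (1 - 2 * s))) (at s)"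
proof -
  define Q where "Q = sqrt (1 - 2 * s)"
  have s: "0 < 1 - s" and Q: "0 < Q"
    using assms by (simp_all add: Q_def)
  have "-1 < s / (1 - s)" "s / (1 - s) < 1"
    using s assms by (simp_all add: field_simps)
  moreover have "((\<lambda>s. s / (1 - s)) has_real_derivative 1 / (1 - s)^2) (at s)"
    using s by (auto intro!: derivative_eq_intros simp: field_simps power2_eq_square)
  ultimately have D: "((\<lambda>s. arcsin (s / (1 - s))) has_real_derivative
      inverse (sqrt (1 - (s / (1 - s))^2)) * (1 / (1 - s)^2)) (at s)"
    by (intro DERIV_chain2[OF DERIV_arcsin])
  have sqrt_eq: "sqrt (1 - (s / (1 - s))^2) = Q / (1 - s)"
  proof -
    have "1 - (s / (1 - s))^2 = ((1 - s)^2 - s^2) / (1 - s)^2"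
      using s by (simp add: field_simps)
    also have "(1 - s)^2 - s^2 = 1 - 2 * s"
      by (simp add: power2_eq_square algebra_simps)
    finally show ?thesis
      using s by (simp add: Q_def real_sqrt_divide)
  qed
  have inverse_eq: "inverse (Q / r) * (1 / r^2) = 1 / (r * Q)" if "0 < r" for r
    using that Q by (simp add: field_simps power2_eq_square)
  from D have "((\<lambda>s. arcsin (s / (1 - s))) has_real_derivative 1 / ((1 - s) * Q)) (at s)"
    unfolding sqrt_eq inverse_eq[OF s] .
  then show ?thesis
    unfolding Q_def .
qed

definition area_density :: "real \<Rightarrow> real" where
  "area_density s = s^3 * sqrt (1 - 2 * s) + s^2 * (1 - s)^2 * arcsin (s / (1 - s))"

text \<open>Integration by parts against \<open>arcsin (s / (1 - s))\<close>, whose derivative is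
  \<open>1 / ((1 - s) sqrt (1 - 2 s))\<close>: the first coefficient is the primitive of \<open>s\<^sup>2 (1 - s)\<^sup>2\<close>
  vanishing at \<open>s = 1\<close>, so that dividing it by \<open>1 - s\<close> leaves a polynomial.\<close>
definition area_density_primitive :: "real \<Rightarrow> real" where
  "area_density_primitive s =
     (s^3/3 - s^4/2 + s^5/5 - 1/30) * arcsin (s / (1 - s)) +
     (-68/1575 - 31/3150 * s + 1/525 * s^2 + 1/70 * s^3 + 1/5 * s^4) * sqrt (1 - 2 * s)"

lemma has_real_derivative_area_density_primitive:
  assumes "s < 1/2"
  shows "(area_density_primitive has_real_derivative area_density s) (at s)"
proof -
  define P where "P s = s^3/3 - s^4/2 + s^5/5 - 1/30" for s :: real
  define M where "M s = -68/1575 - 31/3150 * s + 1/525 * s^2 + 1/70 * s^3 + 1/5 * s^4" for s :: real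
  define dM where "dM = -31/3150 + 2/525 * s + 3/70 * s^2 + 4/5 * s^3"
  define Q where "Q = sqrt (1 - 2 * s)"
  have s: "0 < 1 - s" and Q: "0 < Q" "Q^2 = 1 - 2 * s"
    using assms by (simp_all add: Q_def)
  have "(P has_real_derivative s^2 * (1 - s)^2) (at s)"
    unfolding P_def by (auto intro!: derivative_eq_intros simp: algebra_simps power2_eq_square
        power3_eq_cube eval_nat_numeral)
  moreover have "(M has_real_derivative dM) (at s)"
    unfolding M_def dM_def
    by (auto intro!: derivative_eq_intros simp: algebra_simps eval_nat_numeral)
  moreover have "((\<lambda>s. sqrt (1 - 2 * s)) has_real_derivative -1 / Q) (at s)"
    using Q by (auto intro!: derivative_eq_intros simp: Q_def field_simps)
  ultimately have deriv: "(area_density_primitive has_real_derivative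
      P s * (1 / ((1 - s) * Q)) + s^2 * (1 - s)^2 * arcsin (s / (1 - s)) +
      (M s * (-1 / Q) + dM * Q)) (at s)"
    unfolding area_density_primitive_def P_def[symmetric] M_def[symmetric] Q_def
    by (intro DERIV_add DERIV_mult' has_real_derivative_arcsin_ratio assms)
  have "P s * (1 / ((1 - s) * Q)) + M s * (-1 / Q) + dM * Q = s^3 * Q"
  proof -
    have "P s * (1 / ((1 - s) * Q)) + M s * (-1 / Q) + dM * Q =
        (P s + (1 - s) * (dM * Q^2 - M s)) / ((1 - s) * Q)"
      using s Q(1) by (simp add: field_simps power2_eq_square)
    also have "P s + (1 - s) * (dM * Q^2 - M s) = s^3 * (1 - s) * Q^2"
      unfolding Q(2) P_def M_def dM_def by (simp add: field_simps eval_nat_numeral)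
    also have "s^3 * (1 - s) * Q^2 / ((1 - s) * Q) = s^3 * Q"
      using s Q(1) by (simp add: power2_eq_square)
    finally show ?thesis .
  qed
  then have "P s * (1 / ((1 - s) * Q)) + s^2 * (1 - s)^2 * arcsin (s / (1 - s)) +
      (M s * (-1 / Q) + dM * Q) = area_density s"
    unfolding area_density_def Q_def[symmetric] by linarith
  with deriv show ?thesis
    by simp
qed

lemma nn_integral_area_density:
  assumes "0 \<le> c"
  shows "(\<integral>\<^sup>+s. ennreal (c * area_density s) * indicator {0..1/2} s \<partial>lborel) =
    ennreal (c * (68/1575 - pi/120))"
proof -
  have "continuous_on {0..1/2} area_density_primitive"
  proof -
    have "\<forall>s\<in>{0..1/2::real}. -1 \<le> s / (1 - s) \<and> s / (1 - s) \<le> 1 \<and> 1 - s \<noteq> 0"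
      by (auto simp: field_simps)
    then show ?thesis
      unfolding area_density_primitive_def[abs_def] by (intro continuous_intros) auto
  qed
  moreover have "0 \<le> c * area_density s" if "0 \<le> s" "s \<le> 1/2" for s
  proof -
    have "arcsin (s / (1 - s)) \<ge> 0"
      using that by (intro arcsin_nonneg) (auto simp: field_simps)
    then show ?thesis
      unfolding area_density_def using that assms
      by (intro add_nonneg_nonneg mult_nonneg_nonneg) auto
  qed
  ultimately have "(\<integral>\<^sup>+s. ennreal (c * area_density s) * indicator {0..1/2} s \<partial>lborel) =
      ennreal (c * area_density_primitive (1/2) - c * area_density_primitive 0)"
    by (intro nn_integral_Icc_FTC DERIV_cmult has_real_derivative_area_density_primitive
        continuous_on_mult_left) auto
  also have "c * area_density_primitive (1/2) - c * area_density_primitive 0 =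
      c * (68/1575 - pi/120)"
    by (simp add: area_density_primitive_def power_divide field_simps)
  finally show ?thesis .
qed

lemma nonneg_weight_one: "nonneg_weight (\<lambda>_ _. 1)"
  by unfold_locales simp_all

lemma antidiagonal_integral_one:
  assumes "0 \<le> s" "s \<le> 1"
  shows "antidiagonal_integral (\<lambda>_ _. 1) s = ennreal (min s (1 - s))"
proof -
  have "antidiagonal_integral (\<lambda>_ _. 1) s =
      (\<integral>\<^sup>+u. indicator {max 0 (s - 1/2)<..<min (1/2) s} u \<partial>lborel)"
    unfolding antidiagonal_integral_def antidiagonal_kernel_def
    by (intro nn_integral_cong) (auto simp: indicator_def)
  also have "\<dots> = ennreal (min s (1 - s))"
    using assms by (auto simp: min_def max_def)
  finally show ?thesis .
qed

lemma nn_integral_unit_weight_convolution: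
  "(\<integral>\<^sup>+s. antidiagonal_integral (\<lambda>_ _. 1) s * antidiagonal_integral (\<lambda>_ _. 1) (1 - s) \<partial>lborel) =
     ennreal (1/12)"
proof -
  have "(\<integral>\<^sup>+s. antidiagonal_integral (\<lambda>_ _. 1) s * antidiagonal_integral (\<lambda>_ _. 1) (1 - s) \<partial>lborel) =
      2 * (\<integral>\<^sup>+s. ennreal (s^2) * indicator {0..1/2} s \<partial>lborel)"
    by (rule nonneg_weight.nn_integral_antidiagonal_convolution[OF nonneg_weight_one])
      (simp add: antidiagonal_integral_one ennreal_mult[symmetric] power2_eq_square)
  also have "(\<integral>\<^sup>+s. ennreal (s^2) * indicator {0..1/2} s \<partial>lborel) = ennreal ((1/2)^3/3 - 0^3/3)"
    by (rule nn_integral_Icc_FTC) (auto intro!: derivative_eq_intros continuous_intros)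
  also have "(1/2::real)^3/3 - 0^3/3 = 1/24"
    by (simp add: power3_eq_cube)
  finally show ?thesis
    by (simp add: ennreal_mult[symmetric] ennreal_numeral[symmetric] del: ennreal_numeral)
qed

lemma nn_integral_sqrt_weight_convolution:
  "(\<integral>\<^sup>+s. antidiagonal_integral (\<lambda>u v. sqrt \<bar>u * v\<bar>) s *
      antidiagonal_integral (\<lambda>u v. sqrt \<bar>u * v\<bar>) (1 - s) \<partial>lborel) =
     ennreal (pi/16 * (68/1575 - pi/120))"
proof -
  have "(\<integral>\<^sup>+s. antidiagonal_integral (\<lambda>u v. sqrt \<bar>u * v\<bar>) s *
      antidiagonal_integral (\<lambda>u v. sqrt \<bar>u * v\<bar>) (1 - s) \<partial>lborel) =
      2 * (\<integral>\<^sup>+s. ennreal (pi/32 * area_density s) * indicator {0..1/2} s \<partial>lborel)"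
  proof (rule nonneg_weight.nn_integral_antidiagonal_convolution[OF nonneg_weight_sqrt])
    fix s :: real
    assume "0 < s" "s < 1/2"
    then show "antidiagonal_integral (\<lambda>u v. sqrt \<bar>u * v\<bar>) s *
        antidiagonal_integral (\<lambda>u v. sqrt \<bar>u * v\<bar>) (1 - s) = ennreal (pi/32 * area_density s)"
      by (simp add: antidiagonal_integral_sqrt_small antidiagonal_integral_sqrt_large
          area_density_def ennreal_mult'[symmetric] field_simps power2_eq_square power3_eq_cube)
  qed
  also have "(\<integral>\<^sup>+s. ennreal (pi/32 * area_density s) * indicator {0..1/2} s \<partial>lborel) =
      ennreal (pi/32 * (68/1575 - pi/120))"
    by (rule nn_integral_area_density) simp
  finally show ?thesis
    using pi_less_4
    by (simp add: ennreal_mult[symmetric] ennreal_numeral[symmetric] del: ennreal_numeral)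
qed

section \<open>The expected area\<close>

lemma short_pieces_iff_quadrilateral_sides:
  assumes "a + b + c + d = 1"
  shows "short_pieces a b c d \<longleftrightarrow> quadrilateral_sides a b c d"
  using assms unfolding short_pieces_def quadrilateral_sides_def by auto

lemma max_quad_area_eq_split_weight:
  assumes "a + b + c + d = 1" "short_pieces a b c d"
  shows "max_quad_area a b c d = split_weight (\<lambda>u v. sqrt \<bar>u * v\<bar>) a b c d"
proof -
  have halves: "(b+c+d-a)/2 = 1/2 - a" "(a+c+d-b)/2 = 1/2 - b" "(a+b+d-c)/2 = 1/2 - c"
    "(a+b+c-d)/2 = 1/2 - d"
    using assms(1) by (simp_all add: field_simps)
  have "max_quad_area a b c d = brahmagupta_area a b c d"
    using assms by (simp add: max_quad_area_eq_brahmagupta short_pieces_iff_quadrilateral_sides)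
  also have "\<dots> = sqrt ((1/2 - a) * (1/2 - b) * (1/2 - c) * (1/2 - d))"
    unfolding brahmagupta_area_def halves ..
  also have "\<dots> = split_weight (\<lambda>u v. sqrt \<bar>u * v\<bar>) a b c d"
    using assms(2)
    by (simp add: split_weight_def short_pieces_def real_sqrt_mult abs_of_pos mult.assoc)
  finally show ?thesis .
qed

text \<open>Off \<open>short_split\<close> the value is the unspecified real \<open>Sup {}\<close>; inside the event this
  happens only on a null set.\<close>
lemma max_area_of_pieces_eq:
  "max_area_of_pieces p =
     (if short_split p then pieces_weight (\<lambda>u v. sqrt \<bar>u * v\<bar>) p else Sup {})"
proof -
  have "max_area_of_pieces p =
      max_quad_area (min3 p) (mid3 p - min3 p) (max3 p - mid3 p) (1 - max3 p)"
    by (simp add: max_area_of_pieces_def pieces_eq)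
  then show ?thesis
    by (simp add: short_split_def pieces_weight_def max_quad_area_eq_split_weight
        max_quad_area_degenerate short_pieces_iff_quadrilateral_sides)
qed

lemma borel_measurable_max_area_of_pieces[measurable]: "max_area_of_pieces \<in> borel_measurable borel"
proof -
  interpret nonneg_weight "\<lambda>u v. sqrt \<bar>u * v\<bar>"
    by (rule nonneg_weight_sqrt)
  show ?thesis
    unfolding max_area_of_pieces_eq[abs_def] by measurable
qed

lemma short_split_imp_quad_event:
  "short_split p \<Longrightarrow> p \<in> ({0..1} \<times> {0..1} \<times> {0..1}) \<inter> quad_event"
  by (cases p) (auto simp: short_split_def short_pieces_def quad_event_def pieces_eq
      min3_def mid3_def max3_def min_def max_def split: if_splits)

lemma sets_quad_event[measurable]: "quad_event \<in> sets borel"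
proof -
  have quad_event_eq: "quad_event =
      {p. min3 p < 1/2 \<and> mid3 p - min3 p < 1/2 \<and> max3 p - mid3 p < 1/2 \<and> 1 - max3 p < 1/2}"
    by (auto simp: quad_event_def pieces_eq)
  show ?thesis
    unfolding quad_event_eq by measurable
qed

lemma sets_unit_cube[measurable]:
  "{0..1} \<times> {0..1} \<times> {0..1} \<in> sets (borel :: (real \<times> real \<times> real) measure)"
  by (intro borel_closed closed_Times) auto

lemma AE_quad_event_iff_short_split:
  "AE p in lborel. p \<in> ({0..1} \<times> {0..1} \<times> {0..1}) \<inter> quad_event \<longleftrightarrow> short_split p"
  using AE_lborel3_distinct AE_lborel3_coordinates_ne[of 0] AE_lborel3_coordinates_ne[of 1]
proof eventually_elim
  case (elim p)
  obtain x y z where "p = (x, y, z)"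
    by (cases p)
  with elim have "p \<in> ({0..1} \<times> {0..1} \<times> {0..1}) \<inter> quad_event \<Longrightarrow> short_split p"
    by (auto simp: short_split_def short_pieces_def quad_event_def pieces_eq
        min3_def mid3_def max3_def min_def max_def split: if_splits)
  then show ?case
    using short_split_imp_quad_event by blast
qed

lemma pieces_weight_one: "pieces_weight (\<lambda>_ _. 1) p = (if short_split p then 1 else 0)"
  by (simp add: pieces_weight_def split_weight_def short_split_def)

lemma emeasure_cube_quad_event:
  "emeasure lborel (({0..1} \<times> {0..1} \<times> {0..1}) \<inter> quad_event) = ennreal (1/2)"
proof -
  have "emeasure lborel (({0..1} \<times> {0..1} \<times> {0..1}) \<inter> quad_event) =
      (\<integral>\<^sup>+p. indicator (({0..1} \<times> {0..1} \<times> {0..1}) \<inter> quad_event) p \<partial>lborel)"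
    by (rule nn_integral_indicator[symmetric]) simp
  also have "\<dots> = (\<integral>\<^sup>+p. ennreal (pieces_weight (\<lambda>_ _. 1) p) \<partial>lborel)"
    using AE_quad_event_iff_short_split
    by (intro nn_integral_cong_AE) (auto simp: pieces_weight_one indicator_def elim!: AE_mp)
  also have "\<dots> = 6 * ennreal (1/12)"
    by (simp add: nonneg_weight.nn_integral_pieces_weight[OF nonneg_weight_one]
        nn_integral_unit_weight_convolution)
  also have "\<dots> = ennreal (1/2)"
    by (simp add: ennreal_mult[symmetric] ennreal_numeral[symmetric] del: ennreal_numeral)
  finally show ?thesis .
qed

lemma emeasure_unit_cube:
  "emeasure lborel ({0..1} \<times> {0..1} \<times> {0..1} :: (real \<times> real \<times> real) set) = 1"
proof -
  have "{0..1} \<times> {0..1 :: real} \<in> sets (lborel :: (real \<times> real) measure)"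
    by (simp, intro borel_closed closed_Times) auto
  moreover have "emeasure (lborel :: (real \<times> real) measure) ({0..1} \<times> {0..1}) = 1"
    by (simp add: lborel_prod[symmetric] lborel.emeasure_pair_measure_Times)
  ultimately have "emeasure (lborel \<Otimes>\<^sub>M (lborel :: (real \<times> real) measure))
      ({0..1 :: real} \<times> {0..1} \<times> {0..1}) = 1"
    by (subst lborel.emeasure_pair_measure_Times) simp_all
  then show ?thesis
    unfolding lborel_prod .
qed

lemma integral_conditioned_quad_event:
  assumes [measurable]: "f \<in> borel_measurable borel"
    and "\<And>p. 0 \<le> f p" and "\<And>p. \<not> short_split p \<Longrightarrow> f p = 0"
  shows "(\<integral>p. f p \<partial>uniform_measure three_unif quad_event) = 2 * enn2real (\<integral>\<^sup>+p. f p \<partial>lborel)"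
proof -
  define C :: "(real \<times> real \<times> real) set" where "C = {0..1} \<times> {0..1} \<times> {0..1}"
  have [measurable]: "C \<in> sets borel" and three_unif: "three_unif = uniform_measure lborel C"
    by (simp_all add: C_def three_unif_def)
  have "ennreal (f p) * indicator (C \<inter> quad_event) p = ennreal (f p)" for p
    using short_split_imp_quad_event[of p] assms(3)[of p]
    by (cases "short_split p") (auto simp: C_def indicator_def)
  then have "(\<integral>\<^sup>+p. f p \<partial>uniform_measure three_unif quad_event) =
      (\<integral>\<^sup>+p. f p \<partial>lborel) / ennreal (1/2)"
    unfolding three_unif using emeasure_unit_cube emeasure_cube_quad_event
    by (subst nn_integral_uniform_measure_uniform_measure) (simp_all add: C_def)
  also have "\<dots> = 2 * (\<integral>\<^sup>+p. f p \<partial>lborel)"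
    by (simp only: divide_ennreal_def inverse_ennreal) (simp add: mult.commute)
  finally show ?thesis
    unfolding three_unif using assms(2) by (simp add: integral_eq_nn_integral enn2real_mult)
qed

theorem mainTheorem3:
  shows "(\<integral>p. max_area_of_pieces p \<partial>(uniform_measure three_unif quad_event))
           = 17 * pi / 525 - pi\<^sup>2 / 160"
proof -
  interpret sqrt_weight: nonneg_weight "\<lambda>u v. sqrt \<bar>u * v\<bar>"
    by (rule nonneg_weight_sqrt)
  let ?M = "uniform_measure three_unif quad_event"
  let ?area = "pieces_weight (\<lambda>u v. sqrt \<bar>u * v\<bar>)"
  have "AE p in ?M. max_area_of_pieces p = ?area p"
    unfolding three_unif_def using AE_quad_event_iff_short_split
    by (intro AE_uniform_measureI) (auto simp: max_area_of_pieces_eq elim!: AE_mp)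
  then have "(\<integral>p. max_area_of_pieces p \<partial>?M) = (\<integral>p. ?area p \<partial>?M)"
    unfolding three_unif_def by (intro integral_cong_AE) simp_all
  also have "\<dots> = 2 * enn2real (\<integral>\<^sup>+p. ?area p \<partial>lborel)"
    by (rule integral_conditioned_quad_event)
      (simp_all add: sqrt_weight.pieces_weight_nonneg pieces_weight_eq_zero)
  also have "(\<integral>\<^sup>+p. ?area p \<partial>lborel) = 6 * ennreal (pi/16 * (68/1575 - pi/120))"
    by (simp add: sqrt_weight.nn_integral_pieces_weight nn_integral_sqrt_weight_convolution)
  also have "2 * enn2real (6 * ennreal (pi/16 * (68/1575 - pi/120))) = 17 * pi / 525 - pi\<^sup>2 / 160"
    using pi_less_4 by (simp add: enn2real_mult power2_eq_square field_simps)
  finally show ?thesis .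
qed

end
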